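(* Let $N\ge 1$, $p\ge 1$ and $\varepsilon>0$. For $i=1,\dots,N$ let $f_i:\mathbb R^p\to\mathbb R$ be convex and smooth and $g_i:\mathbb R^p\to\mathbb R$ be convex (possibly non-smooth), and suppose $F_i=f_i+g_i$ is Lipschitz continuous with Lipschitz constant $L_i$, i.e. $|F_i(y)-F_i(z)|\le L_i\|y-z\|$ for all $y,z\in\mathbb R^p$. Let $x^\ast$ be an optimal solution of $$\text{minimize}_{x\in\mathbb R^p}\ \frac1N\sum_{i=1}^N F_i(x),$$ and let $(x^\ast_{\mathrm{rel}},x^{1,\ast},\dots,x^{N,\ast})$ be an optimal solution of the relaxed problem $$\text{minimize}_{x,x^1,\dots,x^N\in\mathbb R^p}\ \frac1N\sum_{i=1}^N F_i(x^i)\quad\text{subject to}\quad \|x-x^i\|^2\le\varepsilon^2,\ i=1,\dots,N.$$ Then, with $L=\sum_{i=1}^N L_i$, $$\frac1N\sum_{i=1}^N\bigl(F_i(x^\ast_{\mathrm{rel}})-F_i(x^\ast)\bigr)\le \frac{\varepsilon}{N}L.$$ Furthermore, if the cost function $\frac1N\sum_{i=1}^N F_i$ is strongly convex with modulus $m>0$, then $$\|x^\ast_{\mathrm{rel}}-x^\ast\|^2\le \frac{2\varepsilon L}{Nm}.$$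
   Context: $\|\cdot\|$ denotes the Euclidean norm on $\mathbb R^p$. Strong convexity with modulus $m$ of a function $\phi$ means $\phi(y)\ge\phi(z)+g^T(y-z)+\frac m2\|y-z\|^2$ for all $y,z$ and all subgradients $g$ of $\phi$ at $z$. *)

theory Defs
  imports "HOL-Analysis.Analysis"
begin

definition is_subgradient :: "('a::real_inner \<Rightarrow> real) \<Rightarrow> 'a \<Rightarrow> 'a \<Rightarrow> bool" where
  "is_subgradient \<phi> z g \<longleftrightarrow> (\<forall>y. \<phi> y \<ge> \<phi> z + inner g (y - z))"

definition strongly_convex_mod :: "real \<Rightarrow> ('a::real_inner \<Rightarrow> real) \<Rightarrow> bool" where
  "strongly_convex_mod m \<phi> \<longleftrightarrow>
     (\<forall>y z g. is_subgradient \<phi> z g \<longrightarrow> \<phi> y \<ge> \<phi> z + inner g (y - z) + m / 2 * (norm (y - z))\<^sup>2)"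

end

theory Submission
  imports Defs
begin

text \<open>Comparing the relaxed solution with the feasible point in which every copy equals \<open>x\<^sup>*\<close>
  shows that the copies \<open>x\<^sup>i\<close> do at least as well as \<open>x\<^sup>*\<close>; moving each copy back to
  \<open>x\<^sub>r\<^sub>e\<^sub>l\<close>, at distance at most \<open>\<epsilon>\<close>, costs at most \<open>\<epsilon> L\<^sub>i\<close> by Lipschitz continuity.
  For the second claim, \<open>0\<close> is a subgradient at the minimiser \<open>x\<^sup>*\<close>, so strong convexity bounds
  \<open>m/2 \<parallel>x\<^sub>r\<^sub>e\<^sub>l - x\<^sup>*\<parallel>\<^sup>2\<close> by the optimality gap just estimated.\<close>

lemma lipschitz_const_nonneg:
  fixes F :: "'a::euclidean_space \<Rightarrow> real"
  assumes "\<And>y z. \<bar>F y - F z\<bar> \<le> L * norm (y - z)"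
  shows "L \<ge> 0"
proof -
  obtain b :: 'a where "b \<in> Basis" using nonempty_Basis by blast
  then have "norm b = 1" by simp
  with assms[of b 0] have "\<bar>F b - F 0\<bar> \<le> L" by simp
  then show ?thesis by linarith
qed

lemma lipschitz_le_within_radius:
  fixes F :: "'a::real_normed_vector \<Rightarrow> real"
  assumes "\<bar>F y - F z\<bar> \<le> L * norm (y - z)" and "L \<ge> 0" and "norm (y - z) \<le> \<epsilon>"
  shows "F y \<le> F z + L * \<epsilon>"
proof -
  have "L * norm (y - z) \<le> L * \<epsilon>" using assms(3,2) by (rule mult_left_mono)
  with assms(1) show ?thesis by linarith
qed

lemma sum_relaxation_gap_le:
  fixes F :: "'i \<Rightarrow> 'a::real_normed_vector \<Rightarrow> real"
  assumes "\<And>i y z. i \<in> I \<Longrightarrow> \<bar>F i y - F i z\<bar> \<le> L i * norm (y - z)"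
    and "\<And>i. i \<in> I \<Longrightarrow> L i \<ge> 0"
    and "\<And>i. i \<in> I \<Longrightarrow> norm (x - xs i) \<le> \<epsilon>"
    and "(\<Sum>i\<in>I. F i (xs i)) \<le> (\<Sum>i\<in>I. F i x')"
  shows "(\<Sum>i\<in>I. F i x - F i x') \<le> \<epsilon> * (\<Sum>i\<in>I. L i)"
proof -
  have "(\<Sum>i\<in>I. F i x) \<le> (\<Sum>i\<in>I. F i (xs i) + L i * \<epsilon>)"
    using assms(1-3) by (intro sum_mono lipschitz_le_within_radius)
  with assms(4) show ?thesis
    by (simp add: sum.distrib sum_subtractf sum_distrib_left mult.commute)
qed

lemma is_subgradient_zero_minimizer:
  assumes "\<And>x. \<phi> z \<le> \<phi> x"
  shows "is_subgradient \<phi> z 0"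
  using assms by (simp add: is_subgradient_def)

lemma strongly_convex_mod_dist_minimizer:
  fixes \<phi> :: "'a::real_inner \<Rightarrow> real"
  assumes "strongly_convex_mod m \<phi>" and "\<And>x. \<phi> z \<le> \<phi> x"
  shows "m / 2 * (norm (y - z))\<^sup>2 \<le> \<phi> y - \<phi> z"
proof -
  have "is_subgradient \<phi> z 0"
    using assms(2) by (rule is_subgradient_zero_minimizer)
  with assms(1) have "\<phi> z + inner 0 (y - z) + m / 2 * (norm (y - z))\<^sup>2 \<le> \<phi> y"
    unfolding strongly_convex_mod_def by blast
  then show ?thesis by simp
qed

theorem theorem1:
  fixes N :: nat and \<epsilon> :: real
    and f g :: "nat \<Rightarrow> 'a::euclidean_space \<Rightarrow> real"
    and L :: "nat \<Rightarrow> real"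
    and xstar xrel :: 'a and xs :: "nat \<Rightarrow> 'a"
  assumes N: "N \<ge> 1" and eps: "\<epsilon> > 0"
    and f_convex: "\<And>i. i \<in> {1..N} \<Longrightarrow> convex_on UNIV (f i)"
    and f_smooth: "\<And>i x. i \<in> {1..N} \<Longrightarrow> f i differentiable (at x)"
    and g_convex: "\<And>i. i \<in> {1..N} \<Longrightarrow> convex_on UNIV (g i)"
    and lip: "\<And>i y z. i \<in> {1..N} \<Longrightarrow>
               \<bar>(f i y + g i y) - (f i z + g i z)\<bar> \<le> L i * norm (y - z)"
    and opt: "\<And>x. (1 / real N) * (\<Sum>i=1..N. f i xstar + g i xstar)
                    \<le> (1 / real N) * (\<Sum>i=1..N. f i x + g i x)"
    and rel_feas: "\<And>i. i \<in> {1..N} \<Longrightarrow> (norm (xrel - xs i))\<^sup>2 \<le> \<epsilon>\<^sup>2"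
    and rel_opt: "\<And>y ys. (\<forall>i\<in>{1..N}. (norm (y - ys i))\<^sup>2 \<le> \<epsilon>\<^sup>2) \<Longrightarrow>
               (1 / real N) * (\<Sum>i=1..N. f i (xs i) + g i (xs i))
                 \<le> (1 / real N) * (\<Sum>i=1..N. f i (ys i) + g i (ys i))"
  shows "(1 / real N) * (\<Sum>i=1..N. (f i xrel + g i xrel) - (f i xstar + g i xstar))
           \<le> \<epsilon> / real N * (\<Sum>i=1..N. L i)
         \<and> (\<forall>m>0. strongly_convex_mod m (\<lambda>x. (1 / real N) * (\<Sum>i=1..N. f i x + g i x)) \<longrightarrow>
              (norm (xrel - xstar))\<^sup>2 \<le> 2 * \<epsilon> * (\<Sum>i=1..N. L i) / (real N * m))"
proof -
  define \<Phi> where "\<Phi> x = (1 / real N) * (\<Sum>i=1..N. f i x + g i x)" for x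
  have N_pos: "real N > 0" using N by simp
  have "(\<Sum>i=1..N. f i (xs i) + g i (xs i)) \<le> (\<Sum>i=1..N. f i xstar + g i xstar)"
    using rel_opt[of xstar "\<lambda>_. xstar"] eps N_pos by (simp add: divide_le_cancel)
  moreover have "norm (xrel - xs i) \<le> \<epsilon>" if "i \<in> {1..N}" for i
    using power2_le_imp_le[OF rel_feas[OF that]] eps by simp
  ultimately have "(\<Sum>i=1..N. (f i xrel + g i xrel) - (f i xstar + g i xstar)) \<le> \<epsilon> * (\<Sum>i=1..N. L i)"
    using lip lipschitz_const_nonneg[OF lip] by (intro sum_relaxation_gap_le) auto
  then have gap: "(1 / real N) * (\<Sum>i=1..N. (f i xrel + g i xrel) - (f i xstar + g i xstar))
      \<le> \<epsilon> / real N * (\<Sum>i=1..N. L i)"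
    using N_pos by (simp add: divide_right_mono)
  moreover have "(norm (xrel - xstar))\<^sup>2 \<le> 2 * \<epsilon> * (\<Sum>i=1..N. L i) / (real N * m)"
    if "m > 0" and "strongly_convex_mod m \<Phi>" for m
  proof -
    have "m / 2 * (norm (xrel - xstar))\<^sup>2 \<le> \<Phi> xrel - \<Phi> xstar"
      using strongly_convex_mod_dist_minimizer[OF that(2)] opt unfolding \<Phi>_def by blast
    also have "\<dots> \<le> \<epsilon> / real N * (\<Sum>i=1..N. L i)"
      using gap unfolding \<Phi>_def by (simp add: sum_subtractf right_diff_distrib)
    finally show ?thesis using that(1) N_pos by (simp add: field_simps)
  qed
  ultimately show ?thesis unfolding \<Phi>_def by blast
qed

end
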